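(* Let $\mathbf K$ be a commutative field, $p\ge1$, and let $T_1,\dots,T_d\in\mathrm{Rec}_{p\times p}(\mathbf K)$ be linearly independent elements spanning a recursively closed subspace, with shift matrices $\rho(s,t)\in\mathbf K^{d\times d}$ ($0\le s,t<p$) defined by $\rho(s,t)T_k=\sum_{j=1}^d\rho(s,t)_{j,k}T_j$. Then all of $T_1,\dots,T_d$ are of Toeplitz type if and only if the following two conditions hold: (1) $\rho(s,t)$ depends only on $s-t$ for $0\le s,t<p$; (2) writing $\rho(s-t)$ for $\rho(s,t)$ (so $\rho(m)$ is defined for $1-p\le m\le p-1$), one has $\rho(s+p)\rho(t)=\rho(s)\rho(t+1)$ for all $1-p\le s<0$ and $1-p\le t<p-1$.
   Context: $\mathcal M_{p\times p}^l$ is the set of pairs $(U,W)$ of words of length $l$ over $\{0,\dots,p-1\}$ and $\mathcal M_{p\times p}=\bigcup_l\mathcal M_{p\times p}^l$. Functions $A:\mathcal M_{p\times p}\to\mathbf K$ have values $A[U,W]$; shift maps act by $(\rho(S,T)A)[U,W]=A[US,WT]$; a subspace is recursively closed if invariant under all shift maps; $\mathrm{Rec}_{p\times p}(\mathbf K)$ is the set of $A$ whose span of $\{\rho(S,T)A\}$ is finite-dimensional. Words $u_1\dots u_l$ are identified with integers $\sum_j u_jp^{j-1}\in\{0,\dots,p^l-1\}$, so $A[\mathcal M_{p\times p}^l]$ is a $p^l\times p^l$ matrix; $A$ is of Toeplitz type if each such matrix is Toeplitz (entry $(u,w)$ depends only on $u-w$). Products of shift matrices are ordinary matrix products. *)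

theory Defs
  imports "Jordan_Normal_Form.Matrix"
begin

text \<open>Words over the alphabet {0,...,p-1} are lists of naturals with entries below p.
  A function A on M_{p x p} is represented as a function on pairs of lists that
  vanishes outside M_{p x p}.\<close>

definition word :: "nat \<Rightarrow> nat list \<Rightarrow> bool" where
  "word p U \<longleftrightarrow> (\<forall>x\<in>set U. x < p)"

definition inM :: "nat \<Rightarrow> nat list \<Rightarrow> nat list \<Rightarrow> bool" where
  "inM p U W \<longleftrightarrow> word p U \<and> word p W \<and> length U = length W"

definition supported :: "nat \<Rightarrow> (nat list \<Rightarrow> nat list \<Rightarrow> 'a::zero) \<Rightarrow> bool" where
  "supported p A \<longleftrightarrow> (\<forall>U W. \<not> inM p U W \<longrightarrow> A U W = 0)"

definition shift :: "nat \<Rightarrow> nat list \<Rightarrow> nat list \<Rightarrow> (nat list \<Rightarrow> nat list \<Rightarrow> 'a::zero)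
    \<Rightarrow> (nat list \<Rightarrow> nat list \<Rightarrow> 'a)" where
  "shift p S T A = (\<lambda>U W. if inM p U W then A (U @ S) (W @ T) else 0)"

definition lincomb :: "(nat list \<Rightarrow> nat list \<Rightarrow> 'a::field) set
    \<Rightarrow> (nat list \<Rightarrow> nat list \<Rightarrow> 'a) \<Rightarrow> bool" where
  "lincomb B f \<longleftrightarrow> (\<exists>c. f = (\<lambda>U W. \<Sum>b\<in>B. c b * b U W))"

text \<open>Rec_{p x p}(K): the span of all shifts of A is finite-dimensional, i.e.
  contained in the span of a finite set.\<close>
definition Rec :: "nat \<Rightarrow> (nat list \<Rightarrow> nat list \<Rightarrow> 'a::field) \<Rightarrow> bool" where
  "Rec p A \<longleftrightarrow> supported p A \<and>
     (\<exists>B. finite B \<and> (\<forall>S T. inM p S T \<longrightarrow> lincomb B (shift p S T A)))"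

definition word_val :: "nat \<Rightarrow> nat list \<Rightarrow> int" where
  "word_val p U = (\<Sum>j<length U. int (U ! j) * int p ^ j)"

definition toeplitz_type :: "nat \<Rightarrow> (nat list \<Rightarrow> nat list \<Rightarrow> 'a) \<Rightarrow> bool" where
  "toeplitz_type p A \<longleftrightarrow> (\<forall>U W U' W'. inM p U W \<and> inM p U' W' \<and> length U = length U'
      \<and> word_val p U - word_val p W = word_val p U' - word_val p W' \<longrightarrow> A U W = A U' W')"

definition rho_diff :: "(nat \<Rightarrow> nat \<Rightarrow> 'a mat) \<Rightarrow> int \<Rightarrow> 'a mat" where
  "rho_diff rho m = (if m \<ge> 0 then rho (nat m) 0 else rho 0 (nat (- m)))"

end

theory Submission
  imports Defs
begin

text \<open>Iterating the one-letter shifts gives T_k[U0 U, W0 W] = sum_i rho(U,W)_(i,k) T_i[U0, W0]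
  with rho(U,W) = rho(u_1,w_1) ... rho(u_l,w_l). By linear independence of the T_i, all T_k
  are of Toeplitz type iff the matrix-valued function rho(U,W) is, which is a statement about
  the matrices alone. On words of length one and two it yields (1) and (2). Conversely, under (1)
  rho(U,W) is the product of the rho(m) over the signed digits m_j = u_j - w_j in [1-p, p-1] of
  val U - val W. Two signed-digit expansions of the same length of one integer are connected by
  carries (m_j + p, m_(j+1)) <-> (m_j, m_(j+1) + 1), and (2) says exactly that a carry does not
  change the product.\<close>

definition depends_on_difference :: "nat \<Rightarrow> (nat \<Rightarrow> nat \<Rightarrow> 'b) \<Rightarrow> bool" where
  "depends_on_difference p rho \<longleftrightarrow>
     (\<forall>s t s' t'. s < p \<and> t < p \<and> s' < p \<and> t' < p \<and>
        int s - int t = int s' - int t' \<longrightarrow> rho s t = rho s' t')"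

definition carry_compatible :: "nat \<Rightarrow> (int \<Rightarrow> 'b::times) \<Rightarrow> bool" where
  "carry_compatible p R \<longleftrightarrow>
     (\<forall>s t. 1 - int p \<le> s \<and> s < 0 \<and> 1 - int p \<le> t \<and> t < int p - 1 \<longrightarrow>
        R (s + int p) * R t = R s * R (t + 1))"

section \<open>Products over signed digit expansions\<close>

definition signed_digits :: "nat \<Rightarrow> int list \<Rightarrow> bool" where
  "signed_digits p ms \<longleftrightarrow> (\<forall>m\<in>set ms. \<bar>m\<bar> < int p)"

fun digit_val :: "nat \<Rightarrow> int list \<Rightarrow> int" where
  "digit_val p [] = 0"
| "digit_val p (m # ms) = m + int p * digit_val p ms"

fun prod_digits :: "nat \<Rightarrow> (int \<Rightarrow> 'a::semiring_1 mat) \<Rightarrow> int list \<Rightarrow> 'a mat" where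
  "prod_digits d R [] = 1\<^sub>m d"
| "prod_digits d R (m # ms) = R m * prod_digits d R ms"

lemma prod_digits_carrier:
  assumes "\<And>m. \<bar>m\<bar> < int p \<Longrightarrow> R m \<in> carrier_mat d d" and "signed_digits p ms"
  shows "prod_digits d R ms \<in> carrier_mat d d"
  using assms(2) by (induction ms) (auto simp: signed_digits_def intro!: mult_carrier_mat assms(1))

lemma digit_val_Cons_eq_cases:
  assumes "\<bar>a\<bar> < int p" "\<bar>b\<bar> < int p" "digit_val p (a # as) = digit_val p (b # bs)"
  obtains "a = b" "digit_val p as = digit_val p bs"
    | "b = a + int p" "digit_val p as = digit_val p bs + 1"
    | "a = b + int p" "digit_val p bs = digit_val p as + 1"
proof -
  define D where "D = digit_val p as - digit_val p bs"
  have b_a: "b - a = int p * D"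
    using assms(3) by (simp add: D_def algebra_simps)
  with assms(1,2) have "int p * \<bar>D\<bar> < int p * 2"
    by (simp add: abs_mult)
  then have "\<bar>D\<bar> < 2"
    by (simp add: mult_less_cancel_left)
  then consider "D = 0" | "D = 1" | "D = -1"
    by linarith
  then show ?thesis
  proof cases
    case 1
    with b_a show ?thesis by (intro that(1)) (simp_all add: D_def)
  next
    case 2
    with b_a show ?thesis by (intro that(2)) (simp_all add: D_def)
  next
    case 3
    with b_a show ?thesis by (intro that(3)) (simp_all add: D_def)
  qed
qed

lemma signed_digits_head_decrementable:
  assumes "p \<ge> 2" "length ms = length ms'" "signed_digits p ms" "signed_digits p ms'"
    and "digit_val p ms = digit_val p ms' + 1"
  obtains m ns where "Suc (length ns) = length ms" "signed_digits p (m # ns)"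
    "digit_val p (m # ns) = digit_val p ms" "2 - int p \<le> m"
proof -
  obtain a as b bs where ms: "ms = a # as" and ms': "ms' = b # bs"
    using assms(2,5) by (cases ms; cases ms') auto
  consider "2 - int p \<le> a" | "b \<le> int p - 2" | "a = 1 - int p" "b = int p - 1"
    using assms(3,4) ms ms' by (force simp: signed_digits_def)
  then show ?thesis
  proof cases
    case 1
    then show ?thesis using that[of as a] assms(3) ms by simp
  next
    case 2
    then show ?thesis using that[of bs "b + 1"] assms ms ms' by (auto simp: signed_digits_def)
  next
    case 3
    then have "int p * (2 + digit_val p bs - digit_val p as) = 1"
      using assms(5) ms ms' by (simp add: algebra_simps)
    then have "int p dvd 1" by (metis dvd_triv_left)
    with assms(1) show ?thesis by simp
  qed
qed

lemma prod_digits_carry: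
  fixes R :: "int \<Rightarrow> 'a::semiring_1 mat"
  assumes carrier: "\<And>m. \<bar>m\<bar> < int p \<Longrightarrow> R m \<in> carrier_mat d d"
    and carry: "carry_compatible p R"
    and a: "\<bar>a\<bar> < int p" "a < 0" and m: "signed_digits p (m # ns)" "2 - int p \<le> m"
  shows "R a * prod_digits d R (m # ns) = R (a + int p) * prod_digits d R ((m - 1) # ns)"
proof -
  have ns: "signed_digits p ns" "\<bar>m\<bar> < int p"
    using m(1) by (auto simp: signed_digits_def)
  have carriers: "R a \<in> carrier_mat d d" "R (a + int p) \<in> carrier_mat d d"
    "R m \<in> carrier_mat d d" "R (m - 1) \<in> carrier_mat d d" "prod_digits d R ns \<in> carrier_mat d d"
    using a m(2) ns by (auto intro: carrier prod_digits_carrier)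
  have "R a * prod_digits d R (m # ns) = (R a * R m) * prod_digits d R ns"
    using carriers by simp
  also have "R a * R m = R (a + int p) * R (m - 1)"
    using carry[unfolded carry_compatible_def, rule_format, of a "m - 1"] a m(2) ns(2) by simp
  also have "R (a + int p) * R (m - 1) * prod_digits d R ns
      = R (a + int p) * prod_digits d R ((m - 1) # ns)"
    using carriers by simp
  finally show ?thesis .
qed

lemma prod_digits_eq_if_digit_val_eq:
  fixes R :: "int \<Rightarrow> 'a::semiring_1 mat"
  assumes carrier: "\<And>m. \<bar>m\<bar> < int p \<Longrightarrow> R m \<in> carrier_mat d d"
    and carry: "carry_compatible p R"
    and "length ms = length ms'" "signed_digits p ms" "signed_digits p ms'"
    and "digit_val p ms = digit_val p ms'"
  shows "prod_digits d R ms = prod_digits d R ms'"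
  using assms(3-)
proof (induction "length ms" arbitrary: ms ms')
  case 0
  then show ?case by simp
next
  case (Suc n)
  have IH: "prod_digits d R ns = prod_digits d R ns'"
    if "length ns = n" "length ns' = n" "signed_digits p ns" "signed_digits p ns'"
      "digit_val p ns = digit_val p ns'" for ns ns'
    using Suc.hyps(1) that by simp
  have borrow: "prod_digits d R (a # as) = prod_digits d R ((a + int p) # bs)"
    if a: "\<bar>a\<bar> < int p" "a < 0" and tails: "length as = n" "length bs = n"
      "signed_digits p as" "signed_digits p bs" "digit_val p as = digit_val p bs + 1" for a as bs
  proof -
    have "p \<ge> 2" "length as = length bs"
      using a tails by linarith+
    then obtain m ns where mns: "Suc (length ns) = length as" "signed_digits p (m # ns)"
      "digit_val p (m # ns) = digit_val p as" "2 - int p \<le> m"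
      using signed_digits_head_decrementable tails(3-5) by blast
    have decremented: "signed_digits p ((m - 1) # ns)"
      using mns(2,4) by (auto simp: signed_digits_def)
    have "prod_digits d R (a # as) = R a * prod_digits d R (m # ns)"
      using IH[of as "m # ns"] mns tails(1,3) by simp
    also have "\<dots> = R (a + int p) * prod_digits d R ((m - 1) # ns)"
      using prod_digits_carry[OF carrier carry a mns(2,4)] .
    also have "prod_digits d R ((m - 1) # ns) = prod_digits d R bs"
      using IH[OF _ tails(2) decremented tails(4)] mns(1,3) tails(1,5)
      by simp
    finally show ?thesis by simp
  qed
  obtain a as b bs where ms: "ms = a # as" and ms': "ms' = b # bs"
    using Suc.hyps(2) Suc.prems(1) by (cases ms; cases ms') auto
  have prems: "length as = n" "length bs = n" "signed_digits p as" "signed_digits p bs"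
    "\<bar>a\<bar> < int p" "\<bar>b\<bar> < int p"
    using Suc.hyps(2) Suc.prems(1-3) ms ms' by (auto simp: signed_digits_def)
  have "digit_val p (a # as) = digit_val p (b # bs)"
    using Suc.prems(4) ms ms' by simp
  then show ?case
  proof (rule digit_val_Cons_eq_cases[OF prems(5,6)])
    assume "a = b" "digit_val p as = digit_val p bs"
    then show ?thesis using IH[of as bs] prems ms ms' by simp
  next
    assume "b = a + int p" "digit_val p as = digit_val p bs + 1"
    then show ?thesis using borrow[of a as bs] prems ms ms' by simp
  next
    assume "a = b + int p" "digit_val p bs = digit_val p as + 1"
    then show ?thesis using borrow[of b bs as] prems ms ms' by simp
  qed
qed

section \<open>The matrices of words\<close>

lemma word_val_Nil [simp]: "word_val p [] = 0"
  by (simp add: word_val_def)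

lemma word_val_Cons [simp]: "word_val p (u # U) = int u + int p * word_val p U"
  unfolding word_val_def length_Cons sum.lessThan_Suc_shift
  by (simp del: sum.lessThan_Suc add: sum_distrib_left mult_ac)

lemma word_val_append: "word_val p (U @ V) = word_val p U + int p ^ length U * word_val p V"
  by (induction U) (simp_all add: algebra_simps)

definition digit_diffs :: "nat list \<Rightarrow> nat list \<Rightarrow> int list" where
  "digit_diffs U W = map2 (\<lambda>u w. int u - int w) U W"

lemma digit_val_digit_diffs:
  "length U = length W \<Longrightarrow> digit_val p (digit_diffs U W) = word_val p U - word_val p W"
  by (induction U W rule: list_induct2) (auto simp: digit_diffs_def right_diff_distrib)

lemma signed_digits_digit_diffs:
  "length U = length W \<Longrightarrow> word p U \<Longrightarrow> word p W \<Longrightarrow> signed_digits p (digit_diffs U W)"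
  by (induction U W rule: list_induct2) (auto simp: digit_diffs_def signed_digits_def word_def)

lemma length_digit_diffs: "length U = length W \<Longrightarrow> length (digit_diffs U W) = length U"
  by (simp add: digit_diffs_def)

lemma digit_diffs_nat_parts: "digit_diffs (map nat ms) (map (\<lambda>m. nat (- m)) ms) = ms"
  by (induction ms) (auto simp: digit_diffs_def)

fun rho_word :: "nat \<Rightarrow> (nat \<Rightarrow> nat \<Rightarrow> 'a::semiring_1 mat) \<Rightarrow> nat list \<Rightarrow> nat list \<Rightarrow> 'a mat" where
  "rho_word d rho (s # U) (t # W) = rho s t * rho_word d rho U W"
| "rho_word d rho _ _ = 1\<^sub>m d"

lemma rho_word_carrier:
  assumes "\<And>s t. s < p \<Longrightarrow> t < p \<Longrightarrow> rho s t \<in> carrier_mat d d"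
  shows "length U = length W \<Longrightarrow> word p U \<Longrightarrow> word p W \<Longrightarrow> rho_word d rho U W \<in> carrier_mat d d"
  by (induction U W rule: list_induct2) (auto simp: word_def intro!: mult_carrier_mat assms)

lemma rho_diff_eq: "rho_diff rho m = rho (nat m) (nat (- m))"
  by (simp add: rho_diff_def)

lemma rho_diff_carrier:
  assumes "\<And>s t. s < p \<Longrightarrow> t < p \<Longrightarrow> rho s t \<in> carrier_mat d d" and "\<bar>m\<bar> < int p"
  shows "rho_diff rho m \<in> carrier_mat d d"
  using assms by (simp add: rho_diff_eq)

lemma prod_digits_rho_diff:
  "prod_digits d (rho_diff rho) ms = rho_word d rho (map nat ms) (map (\<lambda>m. nat (- m)) ms)"
  by (induction ms) (simp_all add: rho_diff_eq)

lemma rho_word_eq_prod_digits: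
  assumes "\<And>s t. s < p \<Longrightarrow> t < p \<Longrightarrow> rho s t = R (int s - int t)"
  shows "length U = length W \<Longrightarrow> word p U \<Longrightarrow> word p W \<Longrightarrow>
    rho_word d rho U W = prod_digits d R (digit_diffs U W)"
  by (induction U W rule: list_induct2) (auto simp: digit_diffs_def word_def assms)

lemma prod_digits_eq_if_toeplitz_rho_word:
  assumes toeplitz: "toeplitz_type p (rho_word d rho)"
    and "length ms = length ms'" "signed_digits p ms" "signed_digits p ms'"
    and "digit_val p ms = digit_val p ms'"
  shows "prod_digits d (rho_diff rho) ms = prod_digits d (rho_diff rho) ms'"
proof -
  have inM: "inM p (map nat ns) (map (\<lambda>m. nat (- m)) ns)" if "signed_digits p ns" for ns
    using that by (auto simp: inM_def word_def signed_digits_def)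
  have val: "word_val p (map nat ns) - word_val p (map (\<lambda>m. nat (- m)) ns) = digit_val p ns" for ns
    using digit_val_digit_diffs[of "map nat ns" "map (\<lambda>m. nat (- m)) ns" p]
    by (simp add: digit_diffs_nat_parts)
  show ?thesis
    using toeplitz inM[of ms] inM[of ms'] assms(2-)
    by (simp add: prod_digits_rho_diff toeplitz_type_def val)
qed

lemma depends_on_difference_if_toeplitz_rho_word:
  assumes rho_carrier: "\<And>s t. s < p \<Longrightarrow> t < p \<Longrightarrow> rho s t \<in> carrier_mat d d"
    and toeplitz: "toeplitz_type p (rho_word d rho)"
  shows "depends_on_difference p rho"
  unfolding depends_on_difference_def
proof (intro allI impI)
  fix s t s' t'
  assume st: "s < p \<and> t < p \<and> s' < p \<and> t' < p \<and> int s - int t = int s' - int t'"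
  then have "rho_word d rho [s] [t] = rho_word d rho [s'] [t']"
    by (intro toeplitz[unfolded toeplitz_type_def, rule_format]) (simp add: inM_def word_def)
  then show "rho s t = rho s' t'"
    using rho_carrier[of s t] rho_carrier[of s' t'] st by (simp add: right_mult_one_mat)
qed

lemma carry_compatible_if_toeplitz_rho_word:
  assumes rho_carrier: "\<And>s t. s < p \<Longrightarrow> t < p \<Longrightarrow> rho s t \<in> carrier_mat d d"
    and toeplitz: "toeplitz_type p (rho_word d rho)"
  shows "carry_compatible p (rho_diff rho)"
  unfolding carry_compatible_def
proof (intro allI impI)
  fix s t :: int
  assume st: "1 - int p \<le> s \<and> s < 0 \<and> 1 - int p \<le> t \<and> t < int p - 1"
  have "signed_digits p [s + int p, t]" "signed_digits p [s, t + 1]"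
    using st by (auto simp: signed_digits_def)
  moreover have "digit_val p [s + int p, t] = digit_val p [s, t + 1]"
    by (simp add: algebra_simps)
  ultimately have "prod_digits d (rho_diff rho) [s + int p, t] = prod_digits d (rho_diff rho) [s, t + 1]"
    by (intro prod_digits_eq_if_toeplitz_rho_word[OF toeplitz]) simp_all
  moreover have "rho_diff rho t \<in> carrier_mat d d" "rho_diff rho (t + 1) \<in> carrier_mat d d"
    using st by (auto intro: rho_diff_carrier[OF rho_carrier])
  ultimately show "rho_diff rho (s + int p) * rho_diff rho t = rho_diff rho s * rho_diff rho (t + 1)"
    by (simp add: right_mult_one_mat)
qed

lemma toeplitz_rho_word_if_carry_compatible:
  assumes rho_carrier: "\<And>s t. s < p \<Longrightarrow> t < p \<Longrightarrow> rho s t \<in> carrier_mat d d"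
    and diff: "depends_on_difference p rho" and carry: "carry_compatible p (rho_diff rho)"
  shows "toeplitz_type p (rho_word d rho)"
  unfolding toeplitz_type_def
proof (intro allI impI)
  have rho_eq: "rho s t = rho_diff rho (int s - int t)" if "s < p" "t < p" for s t
    unfolding rho_diff_eq
    by (rule diff[unfolded depends_on_difference_def, rule_format]) (use that in auto)
  fix U W U' W'
  assume "inM p U W \<and> inM p U' W' \<and> length U = length U' \<and>
    word_val p U - word_val p W = word_val p U' - word_val p W'"
  then have words: "length U = length W" "word p U" "word p W"
    "length U' = length W'" "word p U'" "word p W'"
    and same: "length U = length U'" "word_val p U - word_val p W = word_val p U' - word_val p W'"
    by (simp_all add: inM_def)
  have "rho_word d rho U W = prod_digits d (rho_diff rho) (digit_diffs U W)"
    using rho_word_eq_prod_digits[of p rho "rho_diff rho"] rho_eq words(1-3) by simp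
  also have "\<dots> = prod_digits d (rho_diff rho) (digit_diffs U' W')"
  proof (rule prod_digits_eq_if_digit_val_eq[OF rho_diff_carrier[OF rho_carrier] carry])
    show "length (digit_diffs U W) = length (digit_diffs U' W')"
      using words(1,4) same(1) by (simp add: length_digit_diffs)
    show "signed_digits p (digit_diffs U W)" "signed_digits p (digit_diffs U' W')"
      using words by (simp_all add: signed_digits_digit_diffs)
    show "digit_val p (digit_diffs U W) = digit_val p (digit_diffs U' W')"
      using words(1,4) same(2) by (simp add: digit_val_digit_diffs)
  qed
  also have "\<dots> = rho_word d rho U' W'"
    using rho_word_eq_prod_digits[of p rho "rho_diff rho"] rho_eq words(4-6) by simp
  finally show "rho_word d rho U W = rho_word d rho U' W'" .
qed

lemma toeplitz_rho_word_iff: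
  assumes "\<And>s t. s < p \<Longrightarrow> t < p \<Longrightarrow> rho s t \<in> carrier_mat d d"
  shows "toeplitz_type p (rho_word d rho) \<longleftrightarrow>
    depends_on_difference p rho \<and> carry_compatible p (rho_diff rho)"
  using depends_on_difference_if_toeplitz_rho_word[where rho = rho, OF assms]
    carry_compatible_if_toeplitz_rho_word[where rho = rho, OF assms]
    toeplitz_rho_word_if_carry_compatible[where rho = rho, OF assms]
  by blast

section \<open>Families closed under the shift maps\<close>

lemma index_mult_mat_sum:
  assumes "A \<in> carrier_mat d d" "B \<in> carrier_mat d d" "j < d" "k < d"
  shows "(A * B) $$ (j, k) = (\<Sum>i<d. A $$ (j, i) * B $$ (i, k))"
  using assms by (auto simp: scalar_prod_def atLeast0LessThan intro!: sum.cong)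

lemma coeffs_unique:
  fixes T :: "nat \<Rightarrow> nat list \<Rightarrow> nat list \<Rightarrow> 'a::field"
  assumes indep: "\<And>c. (\<lambda>U W. \<Sum>k<d. c k * T k U W) = (\<lambda>U W. 0) \<Longrightarrow> \<forall>k<d. c k = 0"
    and eq: "(\<lambda>U W. \<Sum>k<d. c k * T k U W) = (\<lambda>U W. \<Sum>k<d. c' k * T k U W)"
    and "j < d"
  shows "c j = c' j"
proof -
  have "(\<lambda>U W. \<Sum>k<d. (c k - c' k) * T k U W) = (\<lambda>U W. 0)"
  proof (intro ext)
    fix U W
    have "(\<Sum>k<d. c k * T k U W) = (\<Sum>k<d. c' k * T k U W)"
      using eq by meson
    then show "(\<Sum>k<d. (c k - c' k) * T k U W) = 0"
      by (simp add: left_diff_distrib sum_subtractf)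
  qed
  from indep[OF this] \<open>j < d\<close> show ?thesis by simp
qed

lemma shift_eq_if_toeplitz:
  assumes toeplitz: "toeplitz_type p A"
    and "inM p S S'" "inM p U U'" "length S = length U"
    and "word_val p S - word_val p S' = word_val p U - word_val p U'"
  shows "shift p S S' A = shift p U U' A"
proof (intro ext)
  fix V W
  show "shift p S S' A V W = shift p U U' A V W"
  proof (cases "inM p V W")
    case True
    then have "length V = length W"
      by (simp add: inM_def)
    then have "word_val p (V @ X) - word_val p (W @ Y)
        = word_val p V - word_val p W + int p ^ length V * (word_val p X - word_val p Y)" for X Y
      by (simp add: word_val_append algebra_simps)
    then have "word_val p (V @ S) - word_val p (W @ S') = word_val p (V @ U) - word_val p (W @ U')"
      using assms(5) by simp
    moreover have "inM p (V @ S) (W @ S')" "inM p (V @ U) (W @ U')"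
      using True assms(2,3) by (auto simp: inM_def word_def)
    ultimately have "A (V @ S) (W @ S') = A (V @ U) (W @ U')"
      using assms(4) by (intro toeplitz[unfolded toeplitz_type_def, rule_format]) simp
    then show ?thesis
      using True by (simp add: shift_def)
  qed (simp add: shift_def)
qed

locale letter_shift_matrices =
  fixes p d :: nat
    and T :: "nat \<Rightarrow> nat list \<Rightarrow> nat list \<Rightarrow> 'a::field"
    and rho :: "nat \<Rightarrow> nat \<Rightarrow> 'a mat"
  assumes rho_carrier: "\<And>s t. s < p \<Longrightarrow> t < p \<Longrightarrow> rho s t \<in> carrier_mat d d"
    and shift_letter: "\<And>s t k. s < p \<Longrightarrow> t < p \<Longrightarrow> k < d \<Longrightarrow>
      shift p [s] [t] (T k) = (\<lambda>U W. \<Sum>j<d. rho s t $$ (j, k) * T j U W)"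
begin

lemma append_expansion:
  "length U = length W \<Longrightarrow> word p U \<Longrightarrow> word p W \<Longrightarrow> inM p U0 W0 \<Longrightarrow> k < d \<Longrightarrow>
    T k (U0 @ U) (W0 @ W) = (\<Sum>i<d. rho_word d rho U W $$ (i, k) * T i U0 W0)"
proof (induction U W arbitrary: U0 W0 k rule: list_induct2)
  case Nil
  have "(\<Sum>i<d. rho_word d rho [] [] $$ (i, k) * T i U0 W0) = (\<Sum>i<d. if i = k then T i U0 W0 else 0)"
    using Nil by (intro sum.cong) auto
  then show ?case using Nil by simp
next
  case (Cons s U t W)
  let ?Q = "rho_word d rho U W"
  have st: "s < p" "t < p" "word p U" "word p W"
    using Cons.prems by (auto simp: word_def)
  have inM_snoc: "inM p (U0 @ [s]) (W0 @ [t])"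
    using Cons.prems st by (auto simp: inM_def word_def)
  have Q: "?Q \<in> carrier_mat d d"
    using rho_word_carrier[OF rho_carrier Cons.hyps st(3,4)] .
  have shift_T: "T i (U0 @ [s]) (W0 @ [t]) = (\<Sum>j<d. rho s t $$ (j, i) * T j U0 W0)" if "i < d" for i
    using fun_cong[OF fun_cong[OF shift_letter[OF st(1,2) that]], of U0 W0] Cons.prems
    by (simp add: shift_def)
  have "T k (U0 @ s # U) (W0 @ t # W) = (\<Sum>i<d. ?Q $$ (i, k) * T i (U0 @ [s]) (W0 @ [t]))"
    using Cons.IH[OF st(3,4) inM_snoc Cons.prems(4)] by simp
  also have "\<dots> = (\<Sum>i<d. ?Q $$ (i, k) * (\<Sum>j<d. rho s t $$ (j, i) * T j U0 W0))"
    using shift_T by simp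
  also have "\<dots> = (\<Sum>i<d. \<Sum>j<d. rho s t $$ (j, i) * ?Q $$ (i, k) * T j U0 W0)"
    by (simp add: sum_distrib_left mult_ac)
  also have "\<dots> = (\<Sum>j<d. (\<Sum>i<d. rho s t $$ (j, i) * ?Q $$ (i, k)) * T j U0 W0)"
    by (subst sum.swap) (simp add: sum_distrib_right)
  also have "\<dots> = (\<Sum>j<d. (rho s t * ?Q) $$ (j, k) * T j U0 W0)"
    using index_mult_mat_sum[OF rho_carrier[OF st(1,2)] Q] Cons.prems(4) by simp
  finally show ?case by simp
qed

lemma shift_eq_rho_word:
  assumes supported: "\<And>i. i < d \<Longrightarrow> supported p (T i)" and "inM p U W" "k < d"
  shows "shift p U W (T k) = (\<lambda>U0 W0. \<Sum>j<d. rho_word d rho U W $$ (j, k) * T j U0 W0)"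
proof (intro ext)
  fix U0 W0
  show "shift p U W (T k) U0 W0 = (\<Sum>j<d. rho_word d rho U W $$ (j, k) * T j U0 W0)"
  proof (cases "inM p U0 W0")
    case True
    then show ?thesis using append_expansion assms(2,3) by (simp add: shift_def inM_def)
  next
    case False
    then show ?thesis using supported by (simp add: shift_def supported_def)
  qed
qed

lemma toeplitz_rho_word_if_toeplitz:
  assumes supported: "\<And>i. i < d \<Longrightarrow> supported p (T i)"
    and indep: "\<And>c. (\<lambda>U W. \<Sum>k<d. c k * T k U W) = (\<lambda>U W. 0) \<Longrightarrow> \<forall>k<d. c k = 0"
    and toeplitz: "\<forall>k<d. toeplitz_type p (T k)"
  shows "toeplitz_type p (rho_word d rho)"
  unfolding toeplitz_type_def
proof (intro allI impI)
  fix U W U' W'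
  assume "inM p U W \<and> inM p U' W' \<and> length U = length U' \<and>
    word_val p U - word_val p W = word_val p U' - word_val p W'"
  then have UW: "inM p U W" "inM p U' W'"
    and same: "length U = length U'" "word_val p U - word_val p W = word_val p U' - word_val p W'"
    by blast+
  have carriers: "rho_word d rho U W \<in> carrier_mat d d" "rho_word d rho U' W' \<in> carrier_mat d d"
    using UW rho_word_carrier[OF rho_carrier] by (auto simp: inM_def)
  show "rho_word d rho U W = rho_word d rho U' W'"
  proof (rule eq_matI)
    fix j k
    assume "j < dim_row (rho_word d rho U' W')" "k < dim_col (rho_word d rho U' W')"
    then have jk: "j < d" "k < d" using carriers by auto
    have "toeplitz_type p (T k)"
      using toeplitz jk(2) by simp
    then have "shift p U W (T k) = shift p U' W' (T k)"
      using UW same by (rule shift_eq_if_toeplitz)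
    then have coeffs: "(\<lambda>U0 W0. \<Sum>i<d. rho_word d rho U W $$ (i, k) * T i U0 W0)
        = (\<lambda>U0 W0. \<Sum>i<d. rho_word d rho U' W' $$ (i, k) * T i U0 W0)"
      by (simp only: shift_eq_rho_word[OF supported UW(1) jk(2)] shift_eq_rho_word[OF supported UW(2) jk(2)])
    show "rho_word d rho U W $$ (j, k) = rho_word d rho U' W' $$ (j, k)"
      using coeffs_unique[OF indep coeffs jk(1)] by simp
  qed (use carriers in auto)
qed

lemma toeplitz_if_toeplitz_rho_word:
  assumes toeplitz: "toeplitz_type p (rho_word d rho)" and "k < d"
  shows "toeplitz_type p (T k)"
  unfolding toeplitz_type_def
proof (intro allI impI)
  have expansion: "T k U W = (\<Sum>i<d. rho_word d rho U W $$ (i, k) * T i [] [])"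
    if "inM p U W" for U W
    using append_expansion[of U W "[]" "[]" k] that \<open>k < d\<close> by (simp add: inM_def word_def)
  fix U W U' W'
  assume UW: "inM p U W \<and> inM p U' W' \<and> length U = length U' \<and>
    word_val p U - word_val p W = word_val p U' - word_val p W'"
  then have "rho_word d rho U W = rho_word d rho U' W'"
    by (rule toeplitz[unfolded toeplitz_type_def, rule_format])
  then show "T k U W = T k U' W'"
    using expansion[of U W] expansion[of U' W'] UW by simp
qed

lemma toeplitz_iff_toeplitz_rho_word:
  assumes "\<And>i. i < d \<Longrightarrow> supported p (T i)"
    and "\<And>c. (\<lambda>U W. \<Sum>k<d. c k * T k U W) = (\<lambda>U W. 0) \<Longrightarrow> \<forall>k<d. c k = 0"
  shows "(\<forall>k<d. toeplitz_type p (T k)) \<longleftrightarrow> toeplitz_type p (rho_word d rho)"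
  using toeplitz_rho_word_if_toeplitz[OF assms] toeplitz_if_toeplitz_rho_word by blast

end

theorem mainTheorem11:
  fixes p d :: nat
    and T :: "nat \<Rightarrow> (nat list \<Rightarrow> nat list \<Rightarrow> 'a::field)"
    and rho :: "nat \<Rightarrow> nat \<Rightarrow> 'a mat"
  assumes p_pos: "p \<ge> 1"
    and rec: "\<And>k. k < d \<Longrightarrow> Rec p (T k)"
    and indep: "\<And>c. (\<lambda>U W. \<Sum>k<d. c k * T k U W) = (\<lambda>U W. 0) \<Longrightarrow> \<forall>k<d. c k = 0"
    and closed: "\<And>S S' k. inM p S S' \<Longrightarrow> k < d \<Longrightarrow>
                   \<exists>c. shift p S S' (T k) = (\<lambda>U W. \<Sum>j<d. c j * T j U W)"
    and rho_dim: "\<And>s t. s < p \<Longrightarrow> t < p \<Longrightarrow> rho s t \<in> carrier_mat d d"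
    and rho_def: "\<And>s t k. s < p \<Longrightarrow> t < p \<Longrightarrow> k < d \<Longrightarrow>
                   shift p [s] [t] (T k) = (\<lambda>U W. \<Sum>j<d. rho s t $$ (j, k) * T j U W)"
  shows "(\<forall>k<d. toeplitz_type p (T k)) \<longleftrightarrow>
           ((\<forall>s t s' t'. s < p \<and> t < p \<and> s' < p \<and> t' < p \<and>
                int s - int t = int s' - int t' \<longrightarrow> rho s t = rho s' t')
            \<and> (\<forall>s t::int. 1 - int p \<le> s \<and> s < 0 \<and> 1 - int p \<le> t \<and> t < int p - 1 \<longrightarrow>
                rho_diff rho (s + int p) * rho_diff rho t = rho_diff rho s * rho_diff rho (t + 1)))"
proof -
  interpret letter_shift_matrices p d T rho
    using rho_dim rho_def by unfold_locales
  have "\<And>k. k < d \<Longrightarrow> supported p (T k)"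
    using rec by (simp add: Rec_def)
  then have "(\<forall>k<d. toeplitz_type p (T k)) \<longleftrightarrow> toeplitz_type p (rho_word d rho)"
    using indep by (rule toeplitz_iff_toeplitz_rho_word)
  also have "\<dots> \<longleftrightarrow> depends_on_difference p rho \<and> carry_compatible p (rho_diff rho)"
    using rho_dim by (rule toeplitz_rho_word_iff)
  finally show ?thesis
    unfolding depends_on_difference_def carry_compatible_def .
qed

end
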